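(* If $r$ divides $s$, then $\nu(n,P^{(r)}_s)\ge\left(\left(\frac{r}{s}\right)^r+o(1)\right)\binom{n}{r}$, where $o(1)\to0$ as $n\to\infty$ with $r,s$ fixed.
   Context: $K^{(r)}_n$ is the ordered complete $r$-uniform hypergraph on $[n]=\{1,\dots,n\}$ with its natural order; a copy of an ordered hypergraph $H$ in $K^{(r)}_n$ is the image of $H$ under an order-preserving injection $V(H)\to[n]$. The natural path $P^{(r)}_s$ has vertices $v_1<\dots<v_s$ and edges all sets of $r$ consecutive vertices $\{v_j,\dots,v_{j+r-1}\}$, $1\le j\le s-r+1$. $\nu(n,H)$ is the maximum number of pairwise edge-disjoint copies of $H$ in $K^{(r)}_n$. *)

theory Defs
  imports Complex_Main
begin

text \<open>An ordered hypergraph H on the vertex set {0..<m} (natural order) with edge set E.\<close>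

definition ordered_copies :: "nat \<Rightarrow> nat \<Rightarrow> nat set set \<Rightarrow> (nat set \<times> nat set set) set" where
  "ordered_copies n m E =
     {(f ` {0..<m}, (\<lambda>e. f ` e) ` E) | f. strict_mono_on {0..<m} f \<and> f ` {0..<m} \<subseteq> {1..n}}"

definition edge_disjoint_family :: "(nat set \<times> nat set set) set \<Rightarrow> bool" where
  "edge_disjoint_family C \<longleftrightarrow> (\<forall>A\<in>C. \<forall>B\<in>C. A \<noteq> B \<longrightarrow> snd A \<inter> snd B = {})"

definition nu :: "nat \<Rightarrow> nat \<Rightarrow> nat set set \<Rightarrow> nat" where
  "nu n m E = Max {card C | C. C \<subseteq> ordered_copies n m E \<and> edge_disjoint_family C}"

definition path_edges :: "nat \<Rightarrow> nat \<Rightarrow> nat set set" where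
  "path_edges r s = {{j..<j + r} | j. j + r \<le> s}"

end

theory Submission
  imports Defs "HOL-Real_Asymp.Real_Asymp"
begin

text \<open>Let s = k r and cut [n] into k consecutive blocks of length t = n div k. An r-subset
  Y = {y_0 < ... < y_(r-1)} of {0..<t} yields a copy of the path that sends vertex p to position
  y_(p mod r) of block p div r. Any r consecutive path vertices meet every residue class modulo r,
  so every edge of this copy reduces modulo t exactly to Y. Hence distinct Y give edge-disjoint
  copies, and there are (t choose r) ~ (r/s)^r (n choose r) of them.\<close>

lemma finite_ordered_copies:
  assumes "\<forall>e\<in>E. e \<subseteq> {0..<m}"
  shows "finite (ordered_copies n m E)"
proof (rule finite_subset)
  show "ordered_copies n m E \<subseteq> Pow {1..n} \<times> Pow (Pow {1..n})"
    using assms unfolding ordered_copies_def by blast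
qed simp

lemma card_le_nu:
  assumes "\<forall>e\<in>E. e \<subseteq> {0..<m}" and "C \<subseteq> ordered_copies n m E" and "edge_disjoint_family C"
  shows "card C \<le> nu n m E"
proof -
  let ?sizes = "{card C | C. C \<subseteq> ordered_copies n m E \<and> edge_disjoint_family C}"
  have "?sizes \<subseteq> {..card (ordered_copies n m E)}"
    using card_mono[OF finite_ordered_copies[OF assms(1)]] by auto
  then have "finite ?sizes"
    by (rule finite_subset) simp
  then show ?thesis
    unfolding nu_def using assms(2,3) by (intro Max_ge) auto
qed

lemma image_mod_interval:
  fixes r :: nat
  assumes "0 < r"
  shows "(\<lambda>p. p mod r) ` {j..<j + r} = {0..<r}"
proof
  show "(\<lambda>p. p mod r) ` {j..<j + r} \<subseteq> {0..<r}"
    using assms by auto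
  show "{0..<r} \<subseteq> (\<lambda>p. p mod r) ` {j..<j + r}"
  proof
    fix i assume i: "i \<in> {0..<r}"
    define p where "p = j + (i + r - j mod r) mod r"
    have "p mod r = (j mod r + (i + r - j mod r)) mod r"
      unfolding p_def by (simp add: mod_add_left_eq mod_add_right_eq)
    also have "\<dots> = i"
      using i by (simp add: add_increasing)
    finally have "i = p mod r" ..
    moreover have "p \<in> {j..<j + r}"
      using assms unfolding p_def by simp
    ultimately show "i \<in> (\<lambda>p. p mod r) ` {j..<j + r}"
      by (rule image_eqI)
  qed
qed

definition block_embedding :: "nat \<Rightarrow> nat list \<Rightarrow> nat \<Rightarrow> nat" where
  "block_embedding t ys p = 1 + ys ! (p mod length ys) + p div length ys * t"

lemma strict_mono_block_embedding:
  assumes "sorted_wrt (<) ys" and "ys \<noteq> []" and "\<forall>y\<in>set ys. y < t"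
  shows "strict_mono (block_embedding t ys)"
proof (rule strict_monoI)
  fix p q :: nat assume "p < q"
  let ?r = "length ys"
  have ys_lt: "ys ! (p mod ?r) < t"
    using assms(2,3) by simp
  show "block_embedding t ys p < block_embedding t ys q"
  proof (cases "p div ?r = q div ?r")
    case True
    then have "p mod ?r < q mod ?r"
      using \<open>p < q\<close> by (metis div_mult_mod_eq nat_add_left_cancel_less)
    then have "ys ! (p mod ?r) < ys ! (q mod ?r)"
      using assms(1,2) by (simp add: sorted_wrt_nth_less)
    then show ?thesis
      unfolding block_embedding_def using True by simp
  next
    case False
    then have "p div ?r < q div ?r"
      using \<open>p < q\<close> by (meson div_le_mono le_less not_le)
    then have "(p div ?r + 1) * t \<le> q div ?r * t"
      by (intro mult_le_mono1) simp
    then show ?thesis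
      unfolding block_embedding_def using ys_lt by simp
  qed
qed

lemma block_embedding_bounds:
  assumes "ys \<noteq> []" and "\<forall>y\<in>set ys. y < t" and "p < k * length ys"
  shows "block_embedding t ys p \<in> {1..k * t}"
proof -
  have "p div length ys < k"
    using assms(3) by (simp add: less_mult_imp_div_less)
  then have "(p div length ys + 1) * t \<le> k * t"
    by (intro mult_le_mono1) simp
  moreover have "ys ! (p mod length ys) < t"
    using assms(1,2) by simp
  ultimately show ?thesis
    unfolding block_embedding_def by simp
qed

lemma block_embedding_residue:
  assumes "ys \<noteq> []" and "\<forall>y\<in>set ys. y < t"
  shows "(block_embedding t ys p - 1) mod t = ys ! (p mod length ys)"
  using assms unfolding block_embedding_def by simp

definition block_copy :: "nat \<Rightarrow> nat \<Rightarrow> nat list \<Rightarrow> nat set \<times> nat set set" where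
  "block_copy t k ys =
     (block_embedding t ys ` {0..<k * length ys},
      (\<lambda>e. block_embedding t ys ` e) ` path_edges (length ys) (k * length ys))"

lemma block_copy_in_ordered_copies:
  assumes "sorted_wrt (<) ys" and "ys \<noteq> []" and "\<forall>y\<in>set ys. y < t" and "k * t \<le> n"
  shows "block_copy t k ys \<in> ordered_copies n (k * length ys) (path_edges (length ys) (k * length ys))"
proof -
  have "strict_mono_on {0..<k * length ys} (block_embedding t ys)"
    using strict_mono_block_embedding[OF assms(1-3)] monotone_on_subset by blast
  moreover have "block_embedding t ys ` {0..<k * length ys} \<subseteq> {1..n}"
    using block_embedding_bounds[OF assms(2,3)] assms(4) by fastforce
  ultimately show ?thesis
    unfolding block_copy_def ordered_copies_def by blast
qed

lemma block_copy_edge_residues: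
  assumes "ys \<noteq> []" and "\<forall>y\<in>set ys. y < t" and "x \<in> snd (block_copy t k ys)"
  shows "(\<lambda>x. (x - 1) mod t) ` x = set ys"
proof -
  obtain j where x: "x = block_embedding t ys ` {j..<j + length ys}"
    using assms(3) unfolding block_copy_def path_edges_def by auto
  have "(\<lambda>x. (x - 1) mod t) ` x = (!) ys ` (\<lambda>p. p mod length ys) ` {j..<j + length ys}"
    using block_embedding_residue[OF assms(1,2)] by (simp add: x image_image)
  also have "\<dots> = set ys"
    using assms(1) by (simp add: image_mod_interval nth_image)
  finally show ?thesis .
qed

lemma binomial_div_le_nu_path:
  fixes k r :: nat
  assumes "0 < k" and "0 < r"
  shows "n div k choose r \<le> nu n (k * r) (path_edges r (k * r))"
proof -
  define t where "t = n div k"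
  define Ys where "Ys = {Y. Y \<subseteq> {0..<t} \<and> card Y = r}"
  define copy where "copy Y = block_copy t k (sorted_list_of_set Y)" for Y
  have list: "sorted_wrt (<) (sorted_list_of_set Y)" "sorted_list_of_set Y \<noteq> []"
    "\<forall>y\<in>set (sorted_list_of_set Y). y < t" "length (sorted_list_of_set Y) = r"
    "set (sorted_list_of_set Y) = Y" if "Y \<in> Ys" for Y
  proof -
    have "finite Y"
      using that finite_subset unfolding Ys_def by blast
    then show "sorted_wrt (<) (sorted_list_of_set Y)" "sorted_list_of_set Y \<noteq> []"
      "\<forall>y\<in>set (sorted_list_of_set Y). y < t" "length (sorted_list_of_set Y) = r"
      "set (sorted_list_of_set Y) = Y"
      using that assms(2) unfolding Ys_def by auto
  qed
  have edge_residues: "(\<lambda>x. (x - 1) mod t) ` x = Y"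
    if "Y \<in> Ys" and "x \<in> snd (copy Y)" for Y x
    using block_copy_edge_residues list(2,3,5) that unfolding copy_def by metis
  have copies: "copy ` Ys \<subseteq> ordered_copies n (k * r) (path_edges r (k * r))"
    using block_copy_in_ordered_copies[OF list(1-3)] list(4) times_div_less_eq_dividend[of k n]
    unfolding copy_def t_def by fastforce
  have "{0..<r} \<in> path_edges r (k * r)"
    using assms(1) unfolding path_edges_def by force
  have "inj_on copy Ys"
  proof (rule inj_onI)
    fix Y Y' assume "Y \<in> Ys" "Y' \<in> Ys" "copy Y = copy Y'"
    moreover have "snd (copy Y) \<noteq> {}"
      using \<open>{0..<r} \<in> path_edges r (k * r)\<close> list(4)[OF \<open>Y \<in> Ys\<close>]
      unfolding copy_def block_copy_def by auto
    ultimately show "Y = Y'"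
      using edge_residues by (metis ex_in_conv)
  qed
  then have "card (copy ` Ys) = t choose r"
    unfolding Ys_def by (simp add: card_image n_subsets)
  moreover have "edge_disjoint_family (copy ` Ys)"
    unfolding edge_disjoint_family_def using edge_residues by blast
  moreover have "\<forall>e\<in>path_edges r (k * r). e \<subseteq> {0..<k * r}"
    unfolding path_edges_def by auto
  ultimately show ?thesis
    using card_le_nu[OF _ copies] unfolding t_def by simp
qed

lemma tendsto_div_diff_over_diff:
  fixes k i :: nat
  assumes "0 < k"
  shows "(\<lambda>n. (real (n div k) - real i) / (real n - real i)) \<longlonglongrightarrow> 1 / real k"
proof (rule tendsto_sandwich)
  have div_bounds: "real n / real k - 1 \<le> real (n div k)" "real (n div k) \<le> real n / real k" for n
  proof -
    have "real n = real k * real (n div k) + real (n mod k)"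
      by (metis div_mult_mod_eq of_nat_add of_nat_mult mult.commute)
    moreover have "real (n mod k) < real k"
      using assms by simp
    ultimately show "real n / real k - 1 \<le> real (n div k)" "real (n div k) \<le> real n / real k"
      using assms by (simp_all add: field_simps)
  qed
  show "\<forall>\<^sub>F n in sequentially. (real n / real k - 1 - real i) / (real n - real i)
      \<le> (real (n div k) - real i) / (real n - real i)"
    using eventually_gt_at_top[of i] by eventually_elim (simp add: divide_right_mono div_bounds)
  show "\<forall>\<^sub>F n in sequentially. (real (n div k) - real i) / (real n - real i)
      \<le> (real n / real k - real i) / (real n - real i)"
    using eventually_gt_at_top[of i] by eventually_elim (simp add: divide_right_mono div_bounds)
  show "(\<lambda>n. (real n / real k - 1 - real i) / (real n - real i)) \<longlonglongrightarrow> 1 / real k"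
    using assms by (real_asymp simp: inverse_eq_divide)
  show "(\<lambda>n. (real n / real k - real i) / (real n - real i)) \<longlonglongrightarrow> 1 / real k"
    using assms by (real_asymp simp: inverse_eq_divide)
qed

lemma tendsto_binomial_div_ratio:
  fixes k r :: nat
  assumes "0 < k"
  shows "(\<lambda>n. real (n div k choose r) / real (n choose r)) \<longlonglongrightarrow> (1 / real k) ^ r"
proof -
  have "real (n div k choose r) / real (n choose r)
      = (\<Prod>i = 0..<r. (real (n div k) - real i) / (real n - real i))" for n
    by (simp add: binomial_gbinomial gbinomial_prod_rev prod_dividef)
  moreover have "(\<lambda>n. \<Prod>i = 0..<r. (real (n div k) - real i) / (real n - real i))
      \<longlonglongrightarrow> (\<Prod>i = 0..<r. 1 / real k)"
    by (intro tendsto_prod tendsto_div_diff_over_diff assms)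
  ultimately show ?thesis
    by simp
qed

theorem proposition3p1:
  fixes r s :: nat
  assumes "1 \<le> r" and "0 < s" and "r dvd s"
  shows "\<exists>g :: nat \<Rightarrow> real. g \<longlonglongrightarrow> 0 \<and>
           (\<forall>n. real (nu n s (path_edges r s)) \<ge> ((real r / real s) ^ r + g n) * real (n choose r))"
proof -
  define k where "k = s div r"
  have s: "s = k * r" and "0 < k"
    using assms unfolding k_def by auto
  have ratio: "real r / real s = 1 / real k"
    using s assms(1) by simp
  define g where "g n = real (n div k choose r) / real (n choose r) - (1 / real k) ^ r" for n
  have "g \<longlonglongrightarrow> 0"
    using tendsto_diff[OF tendsto_binomial_div_ratio[OF \<open>0 < k\<close>, of r]
        tendsto_const[of "(1 / real k) ^ r"]]
    unfolding g_def by simp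
  moreover have "((real r / real s) ^ r + g n) * real (n choose r) \<le> real (nu n s (path_edges r s))" for n
  proof (cases "n choose r = 0")
    case False
    then have "((real r / real s) ^ r + g n) * real (n choose r) = real (n div k choose r)"
      unfolding g_def ratio by simp
    then show ?thesis
      using binomial_div_le_nu_path[OF \<open>0 < k\<close>, of r n] assms(1) s by simp
  qed (simp add: binomial_eq_0)
  ultimately show ?thesis
    by blast
qed

end
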